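(* Let $G$ be a Hausdorff étale groupoid, let $R$ be a commutative unital ring with the discrete topology, let $T \le R^\times$, and let $(\Sigma, i, q)$ be a discrete twist by $T$ over $G$. Then: (a) $\Sigma$ is étale; (b) $i$ is a homeomorphism onto an open subset of $\Sigma$; (c) for each $\alpha \in G$ there exist an open bisection $B_\alpha$ of $G$ containing $\alpha$ and a continuous map $P_\alpha\colon B_\alpha \to \Sigma$ satisfying $q \circ P_\alpha = \mathrm{id}_{B_\alpha}$, such that $(\beta,z) \mapsto i(r(\beta),z)P_\alpha(\beta)$ is a homeomorphism $B_\alpha \times T \to q^{-1}(B_\alpha)$, and additionally $P_\alpha(G^{(0)} \cap B_\alpha) \subseteq \Sigma^{(0)}$; (d) if $G$ is ample, then for each $\alpha \in G$ the open bisection $B_\alpha$ and the map $P_\alpha$ satisfying the first two properties in (c) can be chosen with $B_\alpha$ compact.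
   Context: Groupoids are locally compact Hausdorff topological groupoids; $G$ is étale if $r$ is a local homeomorphism, ample if it has a basis of compact open bisections. A discrete twist by $T$ over $G$ is a sequence $G^{(0)} \times T \xrightarrow{i} \Sigma \xrightarrow{q} G$, where $T$ carries the discrete topology, $G^{(0)} \times T$ is the trivial group bundle with fibres $T$, $\Sigma$ is a Hausdorff groupoid with $\Sigma^{(0)} = i(G^{(0)} \times \{1\})$, and $i, q$ are continuous groupoid homomorphisms restricting to homeomorphisms of unit spaces, such that: (1) $i(\{x\} \times T) = q^{-1}(x)$ for all $x \in G^{(0)}$, $i$ is injective, and $q$ is a quotient map; (2) for each $\alpha \in G$ there are an open bisection $B_\alpha \ni \alpha$ of $G$ and a continuous $P_\alpha\colon B_\alpha \to \Sigma$ with $q \circ P_\alpha = \mathrm{id}_{B_\alpha}$ such that $(\beta,z) \mapsto i(r(\beta),z)P_\alpha(\beta)$ is a homeomorphism $B_\alpha \times T \to q^{-1}(B_\alpha)$; (3) $i(r(\varepsilon),z)\varepsilon = \varepsilon\, i(s(\varepsilon),z)$ for all $\varepsilon \in \Sigma$, $z \in T$. $\Sigma^{(0)}$ is identified with $G^{(0)}$ via $q$. *)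

theory Defs
  imports "HOL-Analysis.Analysis"
begin

text \<open>The underlying set is the topspace of
  the topology gtop; units are identified with elements of the groupoid
  (unit space = image of the range map).\<close>

record 'a groupoid =
  gtop :: "'a topology"
  gr :: "'a \<Rightarrow> 'a"
  gs :: "'a \<Rightarrow> 'a"
  gmul :: "'a \<Rightarrow> 'a \<Rightarrow> 'a"
  ginv :: "'a \<Rightarrow> 'a"

definition gcarrier :: "('a, 'b) groupoid_scheme \<Rightarrow> 'a set" where
  "gcarrier G = topspace (gtop G)"

definition gunits :: "('a, 'b) groupoid_scheme \<Rightarrow> 'a set" where
  "gunits G = gr G ` gcarrier G"

definition comp_pairs :: "('a, 'b) groupoid_scheme \<Rightarrow> ('a \<times> 'a) set" where
  "comp_pairs G = {(a, b). a \<in> gcarrier G \<and> b \<in> gcarrier G \<and> gs G a = gr G b}"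

definition groupoid :: "('a, 'b) groupoid_scheme \<Rightarrow> bool" where
  "groupoid G \<longleftrightarrow>
    (\<forall>a \<in> gcarrier G.
        gr G a \<in> gcarrier G \<and> gs G a \<in> gcarrier G \<and> ginv G a \<in> gcarrier G \<and>
        gr G (gr G a) = gr G a \<and> gs G (gr G a) = gr G a \<and>
        gr G (gs G a) = gs G a \<and> gs G (gs G a) = gs G a \<and>
        gmul G (gr G a) a = a \<and> gmul G a (gs G a) = a \<and>
        gr G (ginv G a) = gs G a \<and> gs G (ginv G a) = gr G a \<and>
        gmul G a (ginv G a) = gr G a \<and> gmul G (ginv G a) a = gs G a) \<and>
    (\<forall>a b. (a, b) \<in> comp_pairs G \<longrightarrow>
        gmul G a b \<in> gcarrier G \<and> gr G (gmul G a b) = gr G a \<and> gs G (gmul G a b) = gs G b) \<and>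
    (\<forall>a b c. (a, b) \<in> comp_pairs G \<and> (b, c) \<in> comp_pairs G \<longrightarrow>
        gmul G (gmul G a b) c = gmul G a (gmul G b c))"

text \<open>Standing convention: groupoids are locally compact Hausdorff topological groupoids.\<close>

definition topological_groupoid :: "('a, 'b) groupoid_scheme \<Rightarrow> bool" where
  "topological_groupoid G \<longleftrightarrow>
    groupoid G \<and> Hausdorff_space (gtop G) \<and> locally_compact_space (gtop G) \<and>
    continuous_map (subtopology (prod_topology (gtop G) (gtop G)) (comp_pairs G)) (gtop G)
       (\<lambda>(a, b). gmul G a b) \<and>
    continuous_map (gtop G) (gtop G) (ginv G)"

definition local_homeomorphism :: "'a topology \<Rightarrow> 'b topology \<Rightarrow> ('a \<Rightarrow> 'b) \<Rightarrow> bool" where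
  "local_homeomorphism X Y f \<longleftrightarrow>
    f ` topspace X \<subseteq> topspace Y \<and>
    (\<forall>x \<in> topspace X. \<exists>U. openin X U \<and> x \<in> U \<and> openin Y (f ` U) \<and>
        homeomorphic_map (subtopology X U) (subtopology Y (f ` U)) f)"

definition etale :: "('a, 'b) groupoid_scheme \<Rightarrow> bool" where
  "etale G \<longleftrightarrow> topological_groupoid G \<and>
     local_homeomorphism (gtop G) (subtopology (gtop G) (gunits G)) (gr G)"

definition bisection :: "('a, 'b) groupoid_scheme \<Rightarrow> 'a set \<Rightarrow> bool" where
  "bisection G B \<longleftrightarrow> B \<subseteq> gcarrier G \<and> inj_on (gr G) B \<and> inj_on (gs G) B"

definition open_bisection :: "('a, 'b) groupoid_scheme \<Rightarrow> 'a set \<Rightarrow> bool" where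
  "open_bisection G B \<longleftrightarrow> openin (gtop G) B \<and> bisection G B"

definition ample :: "('a, 'b) groupoid_scheme \<Rightarrow> bool" where
  "ample G \<longleftrightarrow> etale G \<and>
     (\<forall>U x. openin (gtop G) U \<and> x \<in> U \<longrightarrow>
        (\<exists>B. open_bisection G B \<and> compactin (gtop G) B \<and> x \<in> B \<and> B \<subseteq> U))"

definition bundle_top :: "('a, 'b) groupoid_scheme \<Rightarrow> 'r set \<Rightarrow> ('a \<times> 'r) topology" where
  "bundle_top G T = prod_topology (subtopology (gtop G) (gunits G)) (discrete_topology T)"

definition local_trivialisation ::
  "('g, 'b) groupoid_scheme \<Rightarrow> 'r::times set \<Rightarrow> ('g \<times> 'r \<Rightarrow> 's) \<Rightarrow> ('s \<Rightarrow> 'g)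
     \<Rightarrow> ('s, 'c) groupoid_scheme \<Rightarrow> 'g set \<Rightarrow> ('g \<Rightarrow> 's) \<Rightarrow> bool" where
  "local_trivialisation G T i q S B P \<longleftrightarrow>
     open_bisection G B \<and>
     continuous_map (subtopology (gtop G) B) (gtop S) P \<and>
     (\<forall>\<beta> \<in> B. q (P \<beta>) = \<beta>) \<and>
     homeomorphic_map (prod_topology (subtopology (gtop G) B) (discrete_topology T))
        (subtopology (gtop S) {e \<in> gcarrier S. q e \<in> B})
        (\<lambda>(\<beta>, z). gmul S (i (gr G \<beta>, z)) (P \<beta>))"

definition discrete_twist ::
  "('g, 'b) groupoid_scheme \<Rightarrow> 'r::monoid_mult set \<Rightarrow> ('g \<times> 'r \<Rightarrow> 's) \<Rightarrow> ('s \<Rightarrow> 'g)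
     \<Rightarrow> ('s, 'c) groupoid_scheme \<Rightarrow> bool" where
  "discrete_twist G T i q S \<longleftrightarrow>
     topological_groupoid S \<and>
     gunits S = i ` (gunits G \<times> {1}) \<and>
     \<comment> \<open>i is a continuous groupoid homomorphism from the trivial bundle G^(0) \<times> T\<close>
     continuous_map (bundle_top G T) (gtop S) i \<and>
     (\<forall>x \<in> gunits G. \<forall>z \<in> T. \<forall>w \<in> T.
        gs S (i (x, z)) = gr S (i (x, w)) \<and> i (x, z * w) = gmul S (i (x, z)) (i (x, w))) \<and>
     \<comment> \<open>q is a continuous groupoid homomorphism\<close>
     continuous_map (gtop S) (gtop G) q \<and>
     (\<forall>a b. (a, b) \<in> comp_pairs S \<longrightarrow>
        gs G (q a) = gr G (q b) \<and> q (gmul S a b) = gmul G (q a) (q b)) \<and>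
     \<comment> \<open>i and q restrict to homeomorphisms of unit spaces\<close>
     homeomorphic_map (subtopology (bundle_top G T) (gunits G \<times> {1}))
        (subtopology (gtop S) (gunits S)) i \<and>
     homeomorphic_map (subtopology (gtop S) (gunits S)) (subtopology (gtop G) (gunits G)) q \<and>
     \<comment> \<open>(1)\<close>
     (\<forall>x \<in> gunits G. i ` ({x} \<times> T) = {e \<in> gcarrier S. q e = x}) \<and>
     inj_on i (gunits G \<times> T) \<and>
     quotient_map (gtop S) (gtop G) q \<and>
     \<comment> \<open>(2)\<close>
     (\<forall>\<alpha> \<in> gcarrier G. \<exists>B P. \<alpha> \<in> B \<and> local_trivialisation G T i q S B P) \<and>
     \<comment> \<open>(3), with \<Sigma>^(0) identified with G^(0) via q\<close>
     (\<forall>e \<in> gcarrier S. \<forall>z \<in> T.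
        gmul S (i (gr G (q e), z)) e = gmul S e (i (gs G (q e), z)))"

end

theory Submission
  imports Defs
begin

text \<open>Every point of S lies in a sheet \<beta> \<mapsto> i (r \<beta>, z) P \<beta> of a local
  trivialisation, which q maps homeomorphically onto an open bisection B of G. On such a sheet
  the range map of S factors as q, followed by the range map of G restricted to B, followed by
  the homeomorphism x \<mapsto> i (x, 1) between the unit spaces; hence S is etale and its unit
  space is open. The slice i (V \<times> {1}) over an open set V of units is the open set of units
  of S above V, and i (V \<times> {z}) is its image under right multiplication by i (s (q e), z), a
  homeomorphism of S whose inverse uses the inverse of z; so i is an open embedding. For (c)
  one takes the unit space itself with P x = i (x, 1) near a unit, and elsewhere shrinks a
  trivialisation to B - gunits G, which is open because G is Hausdorff; for (d) one shrinks it
  to a compact open bisection.\<close>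

lemma
  assumes "groupoid G" "a \<in> gcarrier G"
  shows groupoid_gr_in: "gr G a \<in> gcarrier G"
    and groupoid_gs_in: "gs G a \<in> gcarrier G"
    and groupoid_gr_gr: "gr G (gr G a) = gr G a"
    and groupoid_gs_gr: "gs G (gr G a) = gr G a"
    and groupoid_gr_gs: "gr G (gs G a) = gs G a"
    and groupoid_left_unit: "gmul G (gr G a) a = a"
    and groupoid_right_unit: "gmul G a (gs G a) = a"
    and groupoid_gr_ginv: "gr G (ginv G a) = gs G a"
    and groupoid_gs_ginv: "gs G (ginv G a) = gr G a"
    and groupoid_right_inverse: "gmul G a (ginv G a) = gr G a"
    and groupoid_left_inverse: "gmul G (ginv G a) a = gs G a"
  using assms unfolding groupoid_def by blast+

lemma groupoid_mul_in:
  assumes "groupoid G" "a \<in> gcarrier G" "b \<in> gcarrier G" "gs G a = gr G b"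
  shows "gmul G a b \<in> gcarrier G"
proof -
  have "(a, b) \<in> comp_pairs G" using assms unfolding comp_pairs_def by blast
  with assms(1) show ?thesis unfolding groupoid_def by blast
qed

lemma groupoid_assoc:
  assumes "groupoid G" "a \<in> gcarrier G" "b \<in> gcarrier G" "c \<in> gcarrier G"
    "gs G a = gr G b" "gs G b = gr G c"
  shows "gmul G (gmul G a b) c = gmul G a (gmul G b c)"
proof -
  have "(a, b) \<in> comp_pairs G" "(b, c) \<in> comp_pairs G"
    using assms unfolding comp_pairs_def by blast+
  with assms(1) show ?thesis unfolding groupoid_def by blast
qed

lemma gr_in_gunits: "a \<in> gcarrier G \<Longrightarrow> gr G a \<in> gunits G"
  unfolding gunits_def by (rule imageI)

lemma gs_in_gunits: "groupoid G \<Longrightarrow> a \<in> gcarrier G \<Longrightarrow> gs G a \<in> gunits G"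
  using gr_in_gunits[OF groupoid_gs_in] groupoid_gr_gs by metis

lemma gunits_subset_gcarrier: "groupoid G \<Longrightarrow> gunits G \<subseteq> gcarrier G"
  unfolding gunits_def using groupoid_gr_in by auto

lemma
  assumes "groupoid G" "u \<in> gunits G"
  shows gr_gunits: "gr G u = u" and gs_gunits: "gs G u = u"
proof -
  obtain a where "a \<in> gcarrier G" "u = gr G a" using assms(2) unfolding gunits_def by blast
  then show "gr G u = u" "gs G u = u" using assms(1) groupoid_gr_gr groupoid_gs_gr by simp_all
qed

lemma gunits_eq_fixed_points:
  assumes "groupoid G"
  shows "gunits G = {a \<in> gcarrier G. gr G a = a}"
proof
  show "gunits G \<subseteq> {a \<in> gcarrier G. gr G a = a}"
    using gunits_subset_gcarrier[OF assms] gr_gunits[OF assms] by blast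
  show "{a \<in> gcarrier G. gr G a = a} \<subseteq> gunits G"
  proof
    fix a assume "a \<in> {a \<in> gcarrier G. gr G a = a}"
    then show "a \<in> gunits G" using gr_in_gunits[of a G] by auto
  qed
qed

lemma topological_groupoid_mul_continuous:
  assumes "topological_groupoid G"
    and "continuous_map X (gtop G) f" "continuous_map X (gtop G) g"
    and "\<And>x. x \<in> topspace X \<Longrightarrow> gs G (f x) = gr G (g x)"
  shows "continuous_map X (gtop G) (\<lambda>x. gmul G (f x) (g x))"
proof -
  have "continuous_map X (subtopology (prod_topology (gtop G) (gtop G)) (comp_pairs G))
      (\<lambda>x. (f x, g x))"
    using assms(2-4) continuous_map_image_subset_topspace
    by (fastforce simp: continuous_map_in_subtopology continuous_map_pairedI comp_pairs_def gcarrier_def)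
  with assms(1) show ?thesis
    unfolding topological_groupoid_def by (auto dest: continuous_map_compose simp: o_def)
qed

lemma
  assumes "topological_groupoid G"
  shows topological_groupoid_gr_continuous: "continuous_map (gtop G) (gtop G) (gr G)"
    and topological_groupoid_gs_continuous: "continuous_map (gtop G) (gtop G) (gs G)"
proof -
  have G: "groupoid G" and inv: "continuous_map (gtop G) (gtop G) (ginv G)"
    using assms unfolding topological_groupoid_def by blast+
  have "continuous_map (gtop G) (gtop G) (\<lambda>a. gmul G a (ginv G a))"
    by (rule topological_groupoid_mul_continuous[OF assms continuous_map_id[unfolded id_def] inv])
      (simp add: G groupoid_gr_ginv gcarrier_def)
  then show "continuous_map (gtop G) (gtop G) (gr G)"
    by (rule continuous_map_eq) (simp add: G groupoid_right_inverse gcarrier_def)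
  have "continuous_map (gtop G) (gtop G) (\<lambda>a. gmul G (ginv G a) a)"
    by (rule topological_groupoid_mul_continuous[OF assms inv continuous_map_id[unfolded id_def]])
      (simp add: G groupoid_gs_ginv gcarrier_def)
  then show "continuous_map (gtop G) (gtop G) (gs G)"
    by (rule continuous_map_eq) (simp add: G groupoid_left_inverse gcarrier_def)
qed

lemma topological_groupoid_gunits_closedin:
  assumes "topological_groupoid G"
  shows "closedin (gtop G) (gunits G)"
proof -
  have "closedin (gtop G) {a \<in> topspace (gtop G). gr G a = id a}"
    using assms closedin_continuous_maps_eq[OF _ topological_groupoid_gr_continuous continuous_map_id]
    unfolding topological_groupoid_def by blast
  then show ?thesis
    using assms by (simp add: gunits_eq_fixed_points topological_groupoid_def gcarrier_def)
qed

lemma open_map_inj_on_imp_homeomorphic_map: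
  assumes "continuous_map X Y f" "open_map X Y f" "openin X U" "inj_on f U"
  shows "homeomorphic_map (subtopology X U) (subtopology Y (f ` U)) f"
proof -
  have U: "topspace (subtopology X U) = U"
    using openin_subset[OF assms(3)] by (simp add: inf.absorb2)
  have "open_map (subtopology X U) Y f"
    using assms(2,3) unfolding open_map_def by (metis openin_open_subtopology)
  then have "embedding_map (subtopology X U) Y f"
    using assms(1,4) U by (intro injective_open_imp_embedding_map continuous_map_from_subtopology) simp_all
  then show ?thesis
    unfolding embedding_map_def U .
qed

lemma local_homeomorphism_imp_open_map:
  assumes "local_homeomorphism X Y f"
  shows "open_map X Y f"
  unfolding open_map_def
proof (intro allI impI)
  fix V assume V: "openin X V"
  show "openin Y (f ` V)"
  proof (subst openin_subopen, intro ballI)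
    fix y assume "y \<in> f ` V"
    then obtain x where x: "x \<in> V" "y = f x" by blast
    then have "x \<in> topspace X" using V openin_subset by blast
    then obtain U where U: "openin X U" "x \<in> U" "openin Y (f ` U)"
      "homeomorphic_map (subtopology X U) (subtopology Y (f ` U)) f"
      using assms unfolding local_homeomorphism_def by blast
    have "openin (subtopology X U) (U \<inter> V)"
      using V by (simp add: openin_subtopology_Int2)
    then have "openin (subtopology Y (f ` U)) (f ` (U \<inter> V))"
      using U(4) homeomorphic_imp_open_map open_map_def by blast
    then have "openin Y (f ` (U \<inter> V))" using U(3) openin_trans_full by blast
    then show "\<exists>W. openin Y W \<and> y \<in> W \<and> W \<subseteq> f ` V" using x U by blast
  qed
qed

lemma etale_gr_continuous:
  "etale G \<Longrightarrow> continuous_map (gtop G) (subtopology (gtop G) (gunits G)) (gr G)"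
  unfolding etale_def continuous_map_in_subtopology
  using topological_groupoid_gr_continuous gr_in_gunits by (auto simp: gcarrier_def)

lemma etale_gr_open_map: "etale G \<Longrightarrow> open_map (gtop G) (subtopology (gtop G) (gunits G)) (gr G)"
  unfolding etale_def by (blast intro: local_homeomorphism_imp_open_map)

text \<open>If gr G is injective on a neighbourhood U of a unit, every a \<in> U with gr G a \<in> U
  is a unit, since a and gr G a have the same range.\<close>
lemma etale_gunits_openin:
  assumes "etale G"
  shows "openin (gtop G) (gunits G)"
proof (subst openin_subopen, intro ballI)
  have G: "groupoid G" and r: "continuous_map (gtop G) (gtop G) (gr G)"
    using assms topological_groupoid_gr_continuous unfolding etale_def topological_groupoid_def
    by blast+
  fix x assume x: "x \<in> gunits G"
  then have "x \<in> topspace (gtop G)" using gunits_subset_gcarrier[OF G] unfolding gcarrier_def by auto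
  then obtain U where U: "openin (gtop G) U" "x \<in> U" "inj_on (gr G) U"
    using assms homeomorphic_imp_injective_map openin_subset
    unfolding etale_def local_homeomorphism_def by (metis topspace_subtopology_subset)
  define W where "W = U \<inter> {a \<in> topspace (gtop G). gr G a \<in> U}"
  have "openin (gtop G) W"
    unfolding W_def using U(1) openin_continuous_map_preimage[OF r U(1)] by blast
  moreover have "x \<in> W" using x U(2) gr_gunits[OF G x] \<open>x \<in> topspace (gtop G)\<close> unfolding W_def by simp
  moreover have "W \<subseteq> gunits G"
  proof
    fix a assume a: "a \<in> W"
    then have "a \<in> gcarrier G" unfolding W_def gcarrier_def by blast
    then have "gr G (gr G a) = gr G a" by (rule groupoid_gr_gr[OF G])
    then have "gr G a = a" using U(3) a unfolding W_def inj_on_def by blast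
    then show "a \<in> gunits G" using gr_in_gunits[OF \<open>a \<in> gcarrier G\<close>] by simp
  qed
  ultimately show "\<exists>W. openin (gtop G) W \<and> x \<in> W \<and> W \<subseteq> gunits G" by blast
qed

lemma etale_gr_homeomorphic_map:
  assumes "etale G" "openin (gtop G) B" "inj_on (gr G) B"
  shows "openin (subtopology (gtop G) (gunits G)) (gr G ` B)"
    and "homeomorphic_map (subtopology (gtop G) B)
           (subtopology (subtopology (gtop G) (gunits G)) (gr G ` B)) (gr G)"
proof -
  show "openin (subtopology (gtop G) (gunits G)) (gr G ` B)"
    using etale_gr_open_map[OF assms(1)] assms(2) unfolding open_map_def by blast
  show "homeomorphic_map (subtopology (gtop G) B)
      (subtopology (subtopology (gtop G) (gunits G)) (gr G ` B)) (gr G)"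
    using assms by (intro open_map_inj_on_imp_homeomorphic_map etale_gr_continuous etale_gr_open_map)
qed

lemma homeomorphic_map_subtopology_image:
  assumes "homeomorphic_map X Y f" "A \<subseteq> topspace X"
  shows "homeomorphic_map (subtopology X A) (subtopology Y (f ` A)) f"
  using assms by (metis homeomorphic_imp_surjective_map homeomorphic_map_subtopologies
    image_mono topspace_subtopology topspace_subtopology_subset)

locale etale_discrete_twist =
  fixes G :: "'g groupoid" and S :: "'s groupoid" and T :: "'r::comm_monoid_mult set"
    and i :: "'g \<times> 'r \<Rightarrow> 's" and q :: "'s \<Rightarrow> 'g"
  assumes G_etale: "etale G"
    and T_one: "1 \<in> T"
    and T_inv: "\<forall>z \<in> T. \<exists>w \<in> T. z * w = 1"
    and twist: "discrete_twist G T i q S"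
begin

lemma
  shows S_topological: "topological_groupoid S"
    and S_gunits: "gunits S = i ` (gunits G \<times> {1})"
    and i_continuous: "continuous_map (bundle_top G T) (gtop S) i"
    and i_gs_eq_gr: "\<And>x z w. \<lbrakk>x \<in> gunits G; z \<in> T; w \<in> T\<rbrakk> \<Longrightarrow>
                       gs S (i (x, z)) = gr S (i (x, w))"
    and i_mult: "\<And>x z w. \<lbrakk>x \<in> gunits G; z \<in> T; w \<in> T\<rbrakk> \<Longrightarrow>
                   i (x, z * w) = gmul S (i (x, z)) (i (x, w))"
    and q_continuous: "continuous_map (gtop S) (gtop G) q"
    and q_hom: "\<And>a b. (a, b) \<in> comp_pairs S \<Longrightarrow>
                  gs G (q a) = gr G (q b) \<and> q (gmul S a b) = gmul G (q a) (q b)"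
    and i_fibre: "\<And>x. x \<in> gunits G \<Longrightarrow> i ` ({x} \<times> T) = {e \<in> gcarrier S. q e = x}"
    and i_inj: "inj_on i (gunits G \<times> T)"
    and exists_trivialisation:
      "\<And>\<alpha>. \<alpha> \<in> gcarrier G \<Longrightarrow> \<exists>B P. \<alpha> \<in> B \<and> local_trivialisation G T i q S B P"
  using twist unfolding discrete_twist_def by blast+

lemma G_topological: "topological_groupoid G"
  using G_etale unfolding etale_def by blast

lemma G_groupoid: "groupoid G"
  using G_topological unfolding topological_groupoid_def by blast

lemma S_groupoid: "groupoid S"
  using S_topological unfolding topological_groupoid_def by blast

lemma
  assumes "a \<in> gcarrier S" "b \<in> gcarrier S" "gs S a = gr S b"
  shows q_gs_eq_gr: "gs G (q a) = gr G (q b)"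
    and q_mult: "q (gmul S a b) = gmul G (q a) (q b)"
  using q_hom[of a b] assms unfolding comp_pairs_def by blast+

lemma
  assumes "x \<in> gunits G" "z \<in> T"
  shows i_in_gcarrier: "i (x, z) \<in> gcarrier S" and q_i: "q (i (x, z)) = x"
  using i_fibre[OF assms(1)] assms(2) by blast+

lemma q_in_gcarrier: "e \<in> gcarrier S \<Longrightarrow> q e \<in> gcarrier G"
  using continuous_map_image_subset_topspace[OF q_continuous] unfolding gcarrier_def by blast

lemma i_one_in_gunits: "x \<in> gunits G \<Longrightarrow> i (x, 1) \<in> gunits S"
  unfolding S_gunits by blast

lemma
  assumes "u \<in> gunits S"
  shows q_gunits: "q u \<in> gunits G" and gunits_eq_i_q: "u = i (q u, 1)"
  using assms q_i[OF _ T_one] unfolding S_gunits by auto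

lemma
  assumes "x \<in> gunits G" "z \<in> T"
  shows gr_i: "gr S (i (x, z)) = i (x, 1)" and gs_i: "gs S (i (x, z)) = i (x, 1)"
  using i_gs_eq_gr[OF assms(1) T_one assms(2)] i_gs_eq_gr[OF assms(1) assms(2) T_one]
    gr_gunits[OF S_groupoid i_one_in_gunits[OF assms(1)]]
    gs_gunits[OF S_groupoid i_one_in_gunits[OF assms(1)]]
  by simp_all

lemma
  assumes e: "e \<in> gcarrier S"
  shows gr_eq_i_gr_q: "gr S e = i (gr G (q e), 1)" and gs_eq_i_gs_q: "gs S e = i (gs G (q e), 1)"
proof -
  have "gs G (q (gr S e)) = gr G (q e)"
    using q_gs_eq_gr[OF groupoid_gr_in[OF S_groupoid e] e] groupoid_gs_gr[OF S_groupoid e] by simp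
  then have "q (gr S e) = gr G (q e)"
    using gs_gunits[OF G_groupoid q_gunits[OF gr_in_gunits[OF e]]] by simp
  then show "gr S e = i (gr G (q e), 1)"
    using gunits_eq_i_q[OF gr_in_gunits[OF e]] by simp
  have "gs G (q e) = gr G (q (gs S e))"
    using q_gs_eq_gr[OF e groupoid_gs_in[OF S_groupoid e]] groupoid_gr_gs[OF S_groupoid e] by simp
  then have "q (gs S e) = gs G (q e)"
    using gr_gunits[OF G_groupoid q_gunits[OF gs_in_gunits[OF S_groupoid e]]] by simp
  then show "gs S e = i (gs G (q e), 1)"
    using gunits_eq_i_q[OF gs_in_gunits[OF S_groupoid e]] by simp
qed

lemma
  assumes e: "e \<in> gcarrier S" and z: "z \<in> T"
  shows i_mult_left_in: "gmul S (i (gr G (q e), z)) e \<in> gcarrier S"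
    and q_i_mult_left: "q (gmul S (i (gr G (q e), z)) e) = q e"
proof -
  have x: "gr G (q e) \<in> gunits G" by (rule gr_in_gunits[OF q_in_gcarrier[OF e]])
  have comp: "gs S (i (gr G (q e), z)) = gr S e"
    using gs_i[OF x z] gr_eq_i_gr_q[OF e] by simp
  show "gmul S (i (gr G (q e), z)) e \<in> gcarrier S"
    by (rule groupoid_mul_in[OF S_groupoid i_in_gcarrier[OF x z] e comp])
  show "q (gmul S (i (gr G (q e), z)) e) = q e"
    using q_mult[OF i_in_gcarrier[OF x z] e comp] q_i[OF x z]
      groupoid_left_unit[OF G_groupoid q_in_gcarrier[OF e]] by simp
qed

definition twist_act :: "'r \<Rightarrow> 's \<Rightarrow> 's" where
  "twist_act z e = gmul S e (i (gs G (q e), z))"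

lemma q_twist_act:
  assumes e: "e \<in> gcarrier S" and z: "z \<in> T"
  shows "q (twist_act z e) = q e"
proof -
  have x: "gs G (q e) \<in> gunits G" by (rule gs_in_gunits[OF G_groupoid q_in_gcarrier[OF e]])
  have "gs S e = gr S (i (gs G (q e), z))"
    using gr_i[OF x z] gs_eq_i_gs_q[OF e] by simp
  then show ?thesis
    unfolding twist_act_def using q_mult[OF e i_in_gcarrier[OF x z]] q_i[OF x z]
      groupoid_right_unit[OF G_groupoid q_in_gcarrier[OF e]] by simp
qed

lemma twist_act_one: "e \<in> gcarrier S \<Longrightarrow> twist_act 1 e = e"
  unfolding twist_act_def
  using gs_eq_i_gs_q groupoid_right_unit[OF S_groupoid] by metis

lemma twist_act_mult:
  assumes e: "e \<in> gcarrier S" and z: "z \<in> T" and w: "w \<in> T"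
  shows "twist_act w (twist_act z e) = twist_act (z * w) e"
proof -
  define x where "x = gs G (q e)"
  have x: "x \<in> gunits G" unfolding x_def by (rule gs_in_gunits[OF G_groupoid q_in_gcarrier[OF e]])
  have "twist_act w (twist_act z e) = gmul S (gmul S e (i (x, z))) (i (x, w))"
    unfolding twist_act_def[of w] q_twist_act[OF e z] unfolding twist_act_def x_def ..
  also have "\<dots> = gmul S e (gmul S (i (x, z)) (i (x, w)))"
    using x z w gr_i gs_i gs_eq_i_gs_q[OF e]
    by (intro groupoid_assoc[OF S_groupoid e i_in_gcarrier i_in_gcarrier]) (simp_all add: x_def)
  also have "\<dots> = twist_act (z * w) e"
    unfolding twist_act_def x_def[symmetric] using i_mult[OF x z w] by simp
  finally show ?thesis .
qed

lemma twist_act_continuous: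
  assumes z: "z \<in> T"
  shows "continuous_map (gtop S) (gtop S) (twist_act z)"
proof -
  have "continuous_map (gtop S) (subtopology (gtop G) (gunits G)) (\<lambda>e. gs G (q e))"
    using continuous_map_compose[OF q_continuous topological_groupoid_gs_continuous[OF G_topological]]
      gs_in_gunits[OF G_groupoid] q_in_gcarrier
    by (auto simp: continuous_map_in_subtopology o_def gcarrier_def)
  then have "continuous_map (gtop S) (bundle_top G T) (\<lambda>e. (gs G (q e), z))"
    unfolding bundle_top_def using z by (intro continuous_map_pairedI) simp_all
  then have "continuous_map (gtop S) (gtop S) (\<lambda>e. i (gs G (q e), z))"
    using continuous_map_compose[OF _ i_continuous] by (simp add: o_def)
  then show ?thesis
    unfolding twist_act_def[abs_def]
    using gr_i z gs_eq_i_gs_q gs_in_gunits[OF G_groupoid] q_in_gcarrier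
    by (intro topological_groupoid_mul_continuous[OF S_topological continuous_map_id[unfolded id_def]])
      (simp_all add: gcarrier_def)
qed

lemma twist_act_homeomorphic:
  assumes z: "z \<in> T"
  shows "homeomorphic_map (gtop S) (gtop S) (twist_act z)"
proof -
  obtain w where w: "w \<in> T" "z * w = 1" using T_inv z by blast
  then have "w * z = 1" by (simp add: mult.commute)
  with w z have "homeomorphic_maps (gtop S) (gtop S) (twist_act z) (twist_act w)"
    unfolding homeomorphic_maps_def
    using twist_act_continuous twist_act_mult twist_act_one by (simp add: gcarrier_def)
  then show ?thesis by (rule homeomorphic_maps_imp_map)
qed

definition trivialising_map :: "('g \<Rightarrow> 's) \<Rightarrow> 'g \<times> 'r \<Rightarrow> 's" where
  "trivialising_map P = (\<lambda>(\<beta>, z). gmul S (i (gr G \<beta>, z)) (P \<beta>))"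

lemma
  assumes "local_trivialisation G T i q S B P"
  shows local_trivialisation_openin: "openin (gtop G) B"
    and local_trivialisation_subset: "B \<subseteq> gcarrier G"
    and local_trivialisation_inj_gr: "inj_on (gr G) B"
    and local_trivialisation_continuous: "continuous_map (subtopology (gtop G) B) (gtop S) P"
    and local_trivialisation_section: "\<And>\<beta>. \<beta> \<in> B \<Longrightarrow> q (P \<beta>) = \<beta>"
    and local_trivialisation_homeomorphic:
      "homeomorphic_map (prod_topology (subtopology (gtop G) B) (discrete_topology T))
         (subtopology (gtop S) {e \<in> gcarrier S. q e \<in> B}) (trivialising_map P)"
  using assms unfolding local_trivialisation_def open_bisection_def bisection_def
    trivialising_map_def by blast+

lemma
  assumes lt: "local_trivialisation G T i q S B P" and \<beta>: "\<beta> \<in> B" and z: "z \<in> T"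
  shows trivialising_map_in: "trivialising_map P (\<beta>, z) \<in> gcarrier S"
    and q_trivialising_map: "q (trivialising_map P (\<beta>, z)) = \<beta>"
proof -
  have P: "P \<beta> \<in> gcarrier S"
    using continuous_map_image_subset_topspace[OF local_trivialisation_continuous[OF lt]] \<beta>
      local_trivialisation_subset[OF lt]
    by (auto simp: gcarrier_def)
  have sec: "q (P \<beta>) = \<beta>" by (rule local_trivialisation_section[OF lt \<beta>])
  have "trivialising_map P (\<beta>, z) = gmul S (i (gr G (q (P \<beta>)), z)) (P \<beta>)"
    by (simp add: trivialising_map_def sec)
  then show "trivialising_map P (\<beta>, z) \<in> gcarrier S" "q (trivialising_map P (\<beta>, z)) = \<beta>"
    using i_mult_left_in[OF P z] q_i_mult_left[OF P z] sec by simp_all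
qed

lemma topspace_trivialisation_domain:
  assumes "local_trivialisation G T i q S B P"
  shows "topspace (prod_topology (subtopology (gtop G) B) (discrete_topology T)) = B \<times> T"
  using local_trivialisation_subset[OF assms] by (auto simp: gcarrier_def)

lemma trivialising_map_image:
  assumes lt: "local_trivialisation G T i q S B P" and B': "B' \<subseteq> B"
  shows "trivialising_map P ` (B' \<times> T) = {e \<in> gcarrier S. q e \<in> B'}"
proof
  show "trivialising_map P ` (B' \<times> T) \<subseteq> {e \<in> gcarrier S. q e \<in> B'}"
    using trivialising_map_in[OF lt] q_trivialising_map[OF lt] B' by auto
  show "{e \<in> gcarrier S. q e \<in> B'} \<subseteq> trivialising_map P ` (B' \<times> T)"
  proof
    fix e assume e: "e \<in> {e \<in> gcarrier S. q e \<in> B'}"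
    have "trivialising_map P ` (B \<times> T) = {e \<in> gcarrier S. q e \<in> B}"
      using homeomorphic_imp_surjective_map[OF local_trivialisation_homeomorphic[OF lt]]
      unfolding topspace_trivialisation_domain[OF lt] by (auto simp: gcarrier_def)
    then have "e \<in> trivialising_map P ` (B \<times> T)" using e B' by blast
    then obtain \<beta> z where bz: "\<beta> \<in> B" "z \<in> T" "e = trivialising_map P (\<beta>, z)" by blast
    then have "\<beta> \<in> B'" using e q_trivialising_map[OF lt bz(1,2)] by simp
    with bz show "e \<in> trivialising_map P ` (B' \<times> T)" by blast
  qed
qed

lemma local_trivialisation_restrict:
  assumes lt: "local_trivialisation G T i q S B P" and B': "openin (gtop G) B'" "B' \<subseteq> B"
  shows "local_trivialisation G T i q S B' P"
proof -
  have dom: "topspace (prod_topology (subtopology (gtop G) B) (discrete_topology T)) \<inter> B' \<times> T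
      = B' \<times> T"
    using topspace_trivialisation_domain[OF lt] B'(2) by blast
  have cod: "topspace (subtopology (gtop S) {e \<in> gcarrier S. q e \<in> B}) \<inter> {e \<in> gcarrier S. q e \<in> B'}
      = {e \<in> gcarrier S. q e \<in> B'}"
    using B'(2) by (auto simp: gcarrier_def)
  have "homeomorphic_map
      (subtopology (prod_topology (subtopology (gtop G) B) (discrete_topology T)) (B' \<times> T))
      (subtopology (subtopology (gtop S) {e \<in> gcarrier S. q e \<in> B}) {e \<in> gcarrier S. q e \<in> B'})
      (trivialising_map P)"
    by (rule homeomorphic_map_subtopologies[OF local_trivialisation_homeomorphic[OF lt]])
      (simp only: dom cod trivialising_map_image[OF lt B'(2)])
  moreover have "subtopology (prod_topology (subtopology (gtop G) B) (discrete_topology T)) (B' \<times> T)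
      = prod_topology (subtopology (gtop G) B') (discrete_topology T)"
    using B'(2) by (simp add: subtopology_Times subtopology_subtopology Int_absorb1)
  moreover have "subtopology (subtopology (gtop S) {e \<in> gcarrier S. q e \<in> B}) {e \<in> gcarrier S. q e \<in> B'}
      = subtopology (gtop S) {e \<in> gcarrier S. q e \<in> B'}"
    using B'(2) by (simp add: subtopology_subtopology Int_absorb1 subset_iff)
  ultimately have "homeomorphic_map (prod_topology (subtopology (gtop G) B') (discrete_topology T))
      (subtopology (gtop S) {e \<in> gcarrier S. q e \<in> B'}) (trivialising_map P)"
    by simp
  then show ?thesis
    unfolding local_trivialisation_def open_bisection_def bisection_def trivialising_map_def[symmetric]
  proof (intro conjI)
    show "B' \<subseteq> gcarrier G" using local_trivialisation_subset[OF lt] B'(2) by blast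
    show "inj_on (gr G) B'" using local_trivialisation_inj_gr[OF lt] B'(2) by (rule inj_on_subset)
    show "inj_on (gs G) B'"
      using lt B'(2) unfolding local_trivialisation_def open_bisection_def bisection_def
      by (blast intro: inj_on_subset)
    show "continuous_map (subtopology (gtop G) B') (gtop S) P"
      using local_trivialisation_continuous[OF lt] B'(2) by (rule continuous_map_from_subtopology_mono)
    show "\<forall>\<beta>\<in>B'. q (P \<beta>) = \<beta>" using local_trivialisation_section[OF lt] B'(2) by blast
  qed (use B'(1) in simp_all)
qed

lemma local_trivialisation_sheet:
  assumes lt: "local_trivialisation G T i q S B P" and z: "z \<in> T"
  defines "U \<equiv> (\<lambda>\<beta>. trivialising_map P (\<beta>, z)) ` B"
  shows "openin (gtop S) U"
    and "homeomorphic_map (subtopology (gtop S) U) (subtopology (gtop G) B) q"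
proof -
  let ?X = "prod_topology (subtopology (gtop G) B) (discrete_topology T)"
  let ?Y = "subtopology (gtop S) {e \<in> gcarrier S. q e \<in> B}"
  note hom = local_trivialisation_homeomorphic[OF lt]
  have "openin ?X (B \<times> {z})"
    using local_trivialisation_openin[OF lt] z
    by (simp add: openin_prod_Times_iff openin_subtopology_refl openin_subset)
  moreover have "B \<times> {z} \<subseteq> topspace ?X"
    using z unfolding topspace_trivialisation_domain[OF lt] by blast
  moreover have "U = trivialising_map P ` (B \<times> {z})" unfolding U_def by auto
  ultimately have "openin ?Y U"
    using homeomorphic_map_openness[OF hom] by simp
  moreover have "openin (gtop S) {e \<in> gcarrier S. q e \<in> B}"
    using openin_continuous_map_preimage[OF q_continuous local_trivialisation_openin[OF lt]]
    by (simp add: gcarrier_def)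
  ultimately show "openin (gtop S) U" by (rule openin_trans_full)
  have "continuous_map (subtopology (gtop G) B) ?X (\<lambda>\<beta>. (\<beta>, z))"
    using z by (intro continuous_map_pairedI) (simp_all add: continuous_map_id[unfolded id_def])
  from continuous_map_compose[OF this homeomorphic_imp_continuous_map[OF hom]]
  have cont: "continuous_map (subtopology (gtop G) B) (gtop S) (\<lambda>\<beta>. trivialising_map P (\<beta>, z))"
    by (simp add: continuous_map_in_subtopology o_def)
  have "homeomorphic_maps (subtopology (gtop G) B) (subtopology (gtop S) U)
      (\<lambda>\<beta>. trivialising_map P (\<beta>, z)) q"
    unfolding homeomorphic_maps_def
  proof (intro conjI ballI)
    show "continuous_map (subtopology (gtop G) B) (subtopology (gtop S) U)
        (\<lambda>\<beta>. trivialising_map P (\<beta>, z))"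
      using cont unfolding continuous_map_in_subtopology U_def by auto
    show "continuous_map (subtopology (gtop S) U) (subtopology (gtop G) B) q"
      unfolding continuous_map_in_subtopology U_def
      using continuous_map_from_subtopology[OF q_continuous] q_trivialising_map[OF lt _ z] by auto
    show "q (trivialising_map P (\<beta>, z)) = \<beta>" if "\<beta> \<in> topspace (subtopology (gtop G) B)" for \<beta>
      using q_trivialising_map[OF lt _ z] that by simp
    show "trivialising_map P (q e, z) = e" if "e \<in> topspace (subtopology (gtop S) U)" for e
      using q_trivialising_map[OF lt _ z] that unfolding U_def by auto
  qed
  then show "homeomorphic_map (subtopology (gtop S) U) (subtopology (gtop G) B) q"
    using homeomorphic_maps_sym homeomorphic_maps_imp_map by blast
qed

lemma gunits_homeomorphic_maps:
  "homeomorphic_maps (subtopology (gtop G) (gunits G)) (subtopology (gtop S) (gunits S))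
     (\<lambda>x. i (x, 1)) q"
proof -
  have "continuous_map (subtopology (gtop G) (gunits G)) (bundle_top G T) (\<lambda>x. (x, 1))"
    unfolding bundle_top_def using T_one
    by (intro continuous_map_pairedI) (simp_all add: continuous_map_id[unfolded id_def])
  then have "continuous_map (subtopology (gtop G) (gunits G)) (gtop S) (\<lambda>x. i (x, 1))"
    using continuous_map_compose[OF _ i_continuous] by (simp add: o_def)
  then show ?thesis
    unfolding homeomorphic_maps_def continuous_map_in_subtopology
    using continuous_map_from_subtopology[OF q_continuous] i_one_in_gunits q_i[OF _ T_one]
      q_gunits gunits_eq_i_q[symmetric]
    by auto
qed

lemma gr_homeomorphic_on_sheet:
  assumes lt: "local_trivialisation G T i q S B P" and z: "z \<in> T"
  defines "U \<equiv> (\<lambda>\<beta>. trivialising_map P (\<beta>, z)) ` B"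
  shows "openin (subtopology (gtop S) (gunits S)) (gr S ` U)"
    and "homeomorphic_map (subtopology (gtop S) U)
           (subtopology (subtopology (gtop S) (gunits S)) (gr S ` U)) (gr S)"
proof -
  let ?G0 = "subtopology (gtop G) (gunits G)" and ?S0 = "subtopology (gtop S) (gunits S)"
  define A where "A = gr G ` B"
  have A: "openin ?G0 A" "homeomorphic_map (subtopology (gtop G) B) (subtopology ?G0 A) (gr G)"
    using etale_gr_homeomorphic_map[OF G_etale local_trivialisation_openin[OF lt]
        local_trivialisation_inj_gr[OF lt]] unfolding A_def by blast+
  have j: "homeomorphic_map ?G0 ?S0 (\<lambda>x. i (x, 1))"
    using gunits_homeomorphic_maps homeomorphic_maps_imp_map by blast
  have qU: "q ` U = B" "U \<subseteq> gcarrier S"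
    using q_trivialising_map[OF lt _ z] trivialising_map_in[OF lt _ z] unfolding U_def by force+
  have gr_S: "gr S x = ((\<lambda>x. i (x, 1)) \<circ> gr G \<circ> q) x" if "x \<in> U" for x
    using gr_eq_i_gr_q qU(2) that by auto
  have img: "gr S ` U = (\<lambda>x. i (x, 1)) ` A"
    unfolding A_def qU(1)[symmetric] image_comp using gr_S by (simp cong: image_cong)
  show "openin ?S0 (gr S ` U)"
    using homeomorphic_map_openness[OF j openin_subset[OF A(1)]] A(1) img by simp
  have "homeomorphic_map (subtopology (gtop S) U) (subtopology ?S0 ((\<lambda>x. i (x, 1)) ` A))
      ((\<lambda>x. i (x, 1)) \<circ> gr G \<circ> q)"
    using homeomorphic_map_compose[OF homeomorphic_map_compose[OF
          local_trivialisation_sheet(2)[OF lt z, folded U_def] A(2)]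
        homeomorphic_map_subtopology_image[OF j openin_subset[OF A(1)]]]
    by (simp add: o_assoc)
  then show "homeomorphic_map (subtopology (gtop S) U) (subtopology ?S0 (gr S ` U)) (gr S)"
    unfolding img by (rule homeomorphic_map_eq) (simp add: gr_S)
qed

theorem S_etale: "etale S"
  unfolding etale_def local_homeomorphism_def
proof (intro conjI ballI)
  show "topological_groupoid S" by (rule S_topological)
  show "gr S ` topspace (gtop S) \<subseteq> topspace (subtopology (gtop S) (gunits S))"
    using groupoid_gr_in[OF S_groupoid] gr_in_gunits by (auto simp: gcarrier_def)
  fix e assume "e \<in> topspace (gtop S)"
  then have e: "e \<in> gcarrier S" by (simp add: gcarrier_def)
  obtain B P where lt: "local_trivialisation G T i q S B P" and "q e \<in> B"
    using exists_trivialisation[OF q_in_gcarrier[OF e]] by blast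
  then have "e \<in> trivialising_map P ` (B \<times> T)"
    using trivialising_map_image[OF lt subset_refl] e by blast
  then obtain z where "z \<in> T" and "e \<in> (\<lambda>\<beta>. trivialising_map P (\<beta>, z)) ` B" by force
  then show "\<exists>U. openin (gtop S) U \<and> e \<in> U \<and>
      openin (subtopology (gtop S) (gunits S)) (gr S ` U) \<and>
      homeomorphic_map (subtopology (gtop S) U)
        (subtopology (subtopology (gtop S) (gunits S)) (gr S ` U)) (gr S)"
    using local_trivialisation_sheet(1)[OF lt] gr_homeomorphic_on_sheet[OF lt] by blast
qed

lemma topspace_bundle_top: "topspace (bundle_top G T) = gunits G \<times> T"
  using gunits_subset_gcarrier[OF G_groupoid] unfolding bundle_top_def gcarrier_def by auto

lemma i_slice_openin:
  assumes V: "openin (subtopology (gtop G) (gunits G)) V" and z: "z \<in> T"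
  shows "openin (gtop S) (i ` (V \<times> {z}))"
proof -
  have VG: "V \<subseteq> gunits G" using openin_subset[OF V] by simp
  have "openin (gtop G) V"
    using V etale_gunits_openin[OF G_etale] by (rule openin_trans_full)
  then have "openin (gtop S) ({e \<in> topspace (gtop S). q e \<in> V} \<inter> gunits S)"
    using openin_continuous_map_preimage[OF q_continuous] etale_gunits_openin[OF S_etale]
    by blast
  moreover have "{e \<in> topspace (gtop S). q e \<in> V} \<inter> gunits S = i ` (V \<times> {1})"
    using VG q_gunits gunits_eq_i_q i_one_in_gunits q_i[OF _ T_one] i_in_gcarrier[OF _ T_one]
    by (auto simp: gcarrier_def)
  moreover have "i ` (V \<times> {z}) = twist_act z ` i ` (V \<times> {1})"
  proof -
    have "twist_act z (i (x, 1)) = i (x, z)" if "x \<in> V" for x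
    proof -
      have x: "x \<in> gunits G" using VG that by blast
      have "twist_act z (i (x, 1)) = gmul S (i (x, 1)) (i (x, z))"
        unfolding twist_act_def using q_i[OF x T_one] gs_gunits[OF G_groupoid x] by simp
      also have "\<dots> = i (x, z)" using i_mult[OF x T_one z] by simp
      finally show ?thesis .
    qed
    moreover have "i ` (V \<times> {w}) = (\<lambda>x. i (x, w)) ` V" for w by auto
    ultimately show ?thesis by (simp add: image_image cong: image_cong)
  qed
  ultimately show ?thesis
    using homeomorphic_map_openness[OF twist_act_homeomorphic[OF z] openin_subset] by simp
qed

lemma i_open_map: "open_map (bundle_top G T) (gtop S) i"
  unfolding open_map_def
proof (intro allI impI)
  fix W assume W: "openin (bundle_top G T) W"
  show "openin (gtop S) (i ` W)"
  proof (subst openin_subopen, intro ballI)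
    fix y assume "y \<in> i ` W"
    then obtain x z where xz: "(x, z) \<in> W" "y = i (x, z)" by auto
    obtain U V where UV: "openin (subtopology (gtop G) (gunits G)) U"
        "openin (discrete_topology T) V" "x \<in> U" "z \<in> V" "U \<times> V \<subseteq> W"
      using W xz(1) unfolding bundle_top_def openin_prod_topology_alt by (elim allE impE exE conjE)
    then have "z \<in> T" using openin_subset[OF UV(2)] by auto
    then have "openin (gtop S) (i ` (U \<times> {z}))" by (rule i_slice_openin[OF UV(1)])
    moreover have "y \<in> i ` (U \<times> {z})" using xz UV(3) by blast
    moreover have "i ` (U \<times> {z}) \<subseteq> i ` W" using UV(4,5) by blast
    ultimately show "\<exists>W'. openin (gtop S) W' \<and> y \<in> W' \<and> W' \<subseteq> i ` W" by blast
  qed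
qed

theorem i_open_embedding:
  "openin (gtop S) (i ` (gunits G \<times> T)) \<and>
   homeomorphic_map (bundle_top G T) (subtopology (gtop S) (i ` (gunits G \<times> T))) i"
proof
  show "openin (gtop S) (i ` (gunits G \<times> T))"
    using i_open_map unfolding open_map_def topspace_bundle_top[symmetric] by blast
  have "embedding_map (bundle_top G T) (gtop S) i"
    using i_continuous i_open_map i_inj
    by (intro injective_open_imp_embedding_map) (simp_all add: topspace_bundle_top)
  then show "homeomorphic_map (bundle_top G T) (subtopology (gtop S) (i ` (gunits G \<times> T))) i"
    unfolding embedding_map_def topspace_bundle_top .
qed

lemma q_preimage_gunits: "{e \<in> gcarrier S. q e \<in> gunits G} = i ` (gunits G \<times> T)"
proof
  show "{e \<in> gcarrier S. q e \<in> gunits G} \<subseteq> i ` (gunits G \<times> T)"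
  proof
    fix e assume e: "e \<in> {e \<in> gcarrier S. q e \<in> gunits G}"
    then have "e \<in> i ` ({q e} \<times> T)" using i_fibre[of "q e"] by simp
    moreover have "{q e} \<times> T \<subseteq> gunits G \<times> T" using e by blast
    ultimately show "e \<in> i ` (gunits G \<times> T)" by (meson image_mono subsetD)
  qed
  show "i ` (gunits G \<times> T) \<subseteq> {e \<in> gcarrier S. q e \<in> gunits G}"
    using i_in_gcarrier q_i by auto
qed

lemma gunits_trivialisation: "local_trivialisation G T i q S (gunits G) (\<lambda>x. i (x, 1))"
  unfolding local_trivialisation_def open_bisection_def bisection_def
proof (intro conjI ballI)
  show "openin (gtop G) (gunits G)" by (rule etale_gunits_openin[OF G_etale])
  show "gunits G \<subseteq> gcarrier G" by (rule gunits_subset_gcarrier[OF G_groupoid])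
  show "inj_on (gr G) (gunits G)" "inj_on (gs G) (gunits G)"
    by (auto intro!: inj_onI simp: gr_gunits[OF G_groupoid] gs_gunits[OF G_groupoid])
  show "continuous_map (subtopology (gtop G) (gunits G)) (gtop S) (\<lambda>x. i (x, 1))"
    using gunits_homeomorphic_maps
    by (auto simp: homeomorphic_maps_def continuous_map_in_subtopology)
  show "q (i (x, 1)) = x" if "x \<in> gunits G" for x by (rule q_i[OF that T_one])
  have "{e \<in> gcarrier S. q e \<in> gunits G} = i ` (gunits G \<times> T)"
    by (rule q_preimage_gunits)
  moreover have "gmul S (i (gr G x, z)) (i (x, 1)) = i (x, z)" if "(x, z) \<in> gunits G \<times> T" for x z
    using that i_mult[of x z 1] T_one gr_gunits[OF G_groupoid] by auto
  ultimately show "homeomorphic_map (prod_topology (subtopology (gtop G) (gunits G)) (discrete_topology T))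
      (subtopology (gtop S) {e \<in> gcarrier S. q e \<in> gunits G})
      (\<lambda>(\<beta>, z). gmul S (i (gr G \<beta>, z)) (i (\<beta>, 1)))"
    using i_open_embedding unfolding bundle_top_def
    by (auto intro: homeomorphic_map_eq simp: topspace_bundle_top[unfolded bundle_top_def])
qed

theorem exists_trivialisation_gunits_section:
  assumes "\<alpha> \<in> gcarrier G"
  shows "\<exists>B P. \<alpha> \<in> B \<and> local_trivialisation G T i q S B P \<and> P ` (gunits G \<inter> B) \<subseteq> gunits S"
proof (cases "\<alpha> \<in> gunits G")
  case True
  then show ?thesis using gunits_trivialisation i_one_in_gunits by blast
next
  case False
  obtain B P where "\<alpha> \<in> B" and lt: "local_trivialisation G T i q S B P"
    using exists_trivialisation[OF assms] by blast
  moreover have "openin (gtop G) (B - gunits G)"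
    using local_trivialisation_openin[OF lt] topological_groupoid_gunits_closedin[OF G_topological]
    by (rule openin_diff)
  ultimately show ?thesis
    using False local_trivialisation_restrict[OF lt, of "B - gunits G"] by blast
qed

theorem ample_exists_compact_trivialisation:
  assumes "ample G" "\<alpha> \<in> gcarrier G"
  shows "\<exists>B P. \<alpha> \<in> B \<and> local_trivialisation G T i q S B P \<and> compactin (gtop G) B"
proof -
  obtain B P where "\<alpha> \<in> B" and lt: "local_trivialisation G T i q S B P"
    using exists_trivialisation[OF assms(2)] by blast
  then obtain K where "open_bisection G K" "compactin (gtop G) K" "\<alpha> \<in> K" "K \<subseteq> B"
    using assms(1) local_trivialisation_openin[OF lt] unfolding ample_def by blast
  then show ?thesis
    using local_trivialisation_restrict[OF lt, of K] unfolding open_bisection_def by blast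
qed

end

theorem lemma4p3:
  fixes G :: "'g groupoid" and S :: "'s groupoid" and T :: "'r::comm_ring_1 set"
    and i :: "'g \<times> 'r \<Rightarrow> 's" and q :: "'s \<Rightarrow> 'g"
  assumes G_etale: "etale G"
    and T_units: "\<forall>z \<in> T. z dvd 1"
    and T_one: "1 \<in> T"
    and T_mult: "\<forall>z \<in> T. \<forall>w \<in> T. z * w \<in> T"
    and T_inv: "\<forall>z \<in> T. \<exists>w \<in> T. z * w = 1"
    and twist: "discrete_twist G T i q S"
  shows "etale S
    \<and> (openin (gtop S) (i ` (gunits G \<times> T)) \<and>
       homeomorphic_map (bundle_top G T) (subtopology (gtop S) (i ` (gunits G \<times> T))) i)
    \<and> (\<forall>\<alpha> \<in> gcarrier G. \<exists>B P. \<alpha> \<in> B \<and> local_trivialisation G T i q S B P \<and>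
          P ` (gunits G \<inter> B) \<subseteq> gunits S)
    \<and> (ample G \<longrightarrow> (\<forall>\<alpha> \<in> gcarrier G. \<exists>B P. \<alpha> \<in> B \<and> local_trivialisation G T i q S B P \<and>
          compactin (gtop G) B))"
proof -
  interpret etale_discrete_twist G S T i q
    using G_etale T_one T_inv twist by unfold_locales
  show ?thesis
    using S_etale i_open_embedding exists_trivialisation_gunits_section
      ample_exists_compact_trivialisation by blast
qed

end
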